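(* For every $n\geq 2$: (a) $E_Y(\overline\Phi^{(2)}_n)=5n(n-1)-8n(H_n-1)$; (b) $E_U(\overline\Phi^{(2)}_n)=\frac{1}{6}n(4n^2+21n-7)-\frac{3}{4}n(n+3)\frac{(2n-2)!!}{(2n-3)!!}$.
   Context: A phylogenetic tree with $n$ leaves is a fully resolved (binary) rooted tree with leaves bijectively labeled by $\{1,\dots,n\}$; $\mathcal{T}_n$ is the set of such trees. For leaves $i\ne j$, $\varphi_T(i,j)$ is the depth (number of arcs from the root) of their lowest common ancestor; $\varphi_T(i,i)$ is the depth of leaf $i$. $\overline\Phi^{(2)}_n$ is the random variable on $\mathcal{T}_n$ giving $\overline\Phi^{(2)}(T)=\sum_{1\le i\le j\le n}\varphi_T(i,j)^2$. $E_Y$ is expectation under the Yule model, $P_Y(T)=\frac{2^{n-1}}{n!}\prod_v\frac{1}{\ell_T(v)-1}$ (product over internal nodes $v$, $\ell_T(v)$ the number of descendant leaves of $v$); $E_U$ is expectation under the uniform distribution $P_U(T)=1/(2n-3)!!$. $H_n=\sum_{i=1}^n1/i$. Double factorials: $(2m-1)!!=(2m-1)(2m-3)\cdots1$, $(2m)!!=(2m)(2m-2)\cdots2$, $0!!=1$. *)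

theory Defs
  imports "HOL-Analysis.Harmonic_Numbers"
begin

text \<open>A phylogenetic tree
 (unordered) is represented canonically: at each internal node the child whose
 leaf set has the smaller minimal label is the left child.\<close>

datatype ptree = Leaf nat | Node ptree ptree

fun leaves :: "ptree \<Rightarrow> nat set" where
  "leaves (Leaf i) = {i}"
| "leaves (Node l r) = leaves l \<union> leaves r"

fun canonical :: "ptree \<Rightarrow> bool" where
  "canonical (Leaf i) = True"
| "canonical (Node l r) = (canonical l \<and> canonical r \<and> leaves l \<inter> leaves r = {}
      \<and> Min (leaves l) < Min (leaves r))"

definition phylo_trees :: "nat \<Rightarrow> ptree set" where
  "phylo_trees n = {t. canonical t \<and> leaves t = {1..n}}"

fun lca_depth :: "ptree \<Rightarrow> nat \<Rightarrow> nat \<Rightarrow> nat" where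
  "lca_depth (Leaf k) i j = 0"
| "lca_depth (Node l r) i j =
     (if i \<in> leaves l \<and> j \<in> leaves l then 1 + lca_depth l i j
      else if i \<in> leaves r \<and> j \<in> leaves r then 1 + lca_depth r i j
      else 0)"

definition Phi2 :: "nat \<Rightarrow> ptree \<Rightarrow> nat" where
  "Phi2 n t = (\<Sum>(i,j)\<in>{(i,j). 1 \<le> i \<and> i \<le> j \<and> j \<le> n}. (lca_depth t i j)^2)"

fun yule_prod :: "ptree \<Rightarrow> real" where
  "yule_prod (Leaf i) = 1"
| "yule_prod (Node l r) =
     yule_prod l * yule_prod r / (real (card (leaves (Node l r))) - 1)"

definition P_Y :: "nat \<Rightarrow> ptree \<Rightarrow> real" where
  "P_Y n t = 2^(n-1) / fact n * yule_prod t"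

fun dfact :: "nat \<Rightarrow> nat" where
  "dfact 0 = 1"
| "dfact (Suc 0) = 1"
| "dfact (Suc (Suc m)) = (Suc (Suc m)) * dfact m"

definition P_U :: "nat \<Rightarrow> ptree \<Rightarrow> real" where
  "P_U n t = 1 / real (dfact (2*n-3))"

definition E_Y_Phi2 :: "nat \<Rightarrow> real" where
  "E_Y_Phi2 n = (\<Sum>t\<in>phylo_trees n. P_Y n t * real (Phi2 n t))"

definition E_U_Phi2 :: "nat \<Rightarrow> real" where
  "E_U_Phi2 n = (\<Sum>t\<in>phylo_trees n. P_U n t * real (Phi2 n t))"

end

theory Submission
  imports Defs "HOL-Computational_Algebra.Formal_Power_Series"
begin

text \<open>Cut a tree at its root. Every pair of leaves on the same side of the root
  gains depth one, so \<open>\<Sum> \<phi>\<close> and \<open>\<Sum> \<phi>\<^sup>2\<close> are additive over the root split up to terms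
  involving lower moments and the sizes of the two sides. For weights that factor over the
  internal nodes, summing over all trees therefore gives a convolution recursion in the number
  of labels. For the Yule weights it collapses to the recurrence
  \<open>(n - 1) E n = 2 (g 1 + \<dots> + g (n - 1))\<close>, whose solutions involve harmonic numbers. For the
  uniform weight it is a product of exponential generating functions; these turn out to be
  polynomials in \<open>sqrt (1 - 2x)\<close> and its inverse, whose coefficients are read off the binomial
  series and give the double factorials.\<close>

lemma sum_Pow_by_card:
  assumes "finite S"
  shows "(\<Sum>B\<in>Pow S. g (card B)) = (\<Sum>j=0..card S. of_nat (card S choose j) * g j)"
proof -
  have "(\<Sum>B\<in>Pow S. g (card B)) = (\<Sum>j=0..card S. \<Sum>B\<in>{B \<in> Pow S. card B = j}. g (card B))"
    by (rule sum.group[symmetric]) (use assms in \<open>auto intro: card_mono\<close>)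
  also have "\<dots> = (\<Sum>j=0..card S. of_nat (card S choose j) * g j)"
  proof (rule sum.cong[OF refl])
    fix j
    have "{B \<in> Pow S. card B = j} = {B. B \<subseteq> S \<and> card B = j}" by auto
    then show "(\<Sum>B\<in>{B \<in> Pow S. card B = j}. g (card B)) = of_nat (card S choose j) * g j"
      using n_subsets[OF assms, of j] by simp
  qed
  finally show ?thesis .
qed

lemma sum_sum_mult_add:
  fixes u p :: "'a \<Rightarrow> 'c::comm_semiring_1" and v q :: "'b \<Rightarrow> 'c"
  shows "(\<Sum>l\<in>L. \<Sum>r\<in>R. u l * v r * (p l + q r))
    = (\<Sum>l\<in>L. u l * p l) * (\<Sum>r\<in>R. v r) + (\<Sum>l\<in>L. u l) * (\<Sum>r\<in>R. v r * q r)"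
proof -
  have "(\<Sum>l\<in>L. \<Sum>r\<in>R. u l * v r * (p l + q r))
      = (\<Sum>l\<in>L. \<Sum>r\<in>R. u l * p l * v r + u l * (v r * q r))"
    by (simp add: algebra_simps)
  then show ?thesis by (simp only: sum.distrib sum_product)
qed

lemma sum_mult_index_symmetric:
  fixes u :: "nat \<Rightarrow> 'a::comm_ring_1"
  shows "(\<Sum>k=1..n-1. of_nat k * (u k + u (n - k))) = of_nat n * (\<Sum>k=1..n-1. u k)"
proof -
  have "(\<Sum>k=1..n-1. of_nat k * u (n - k)) = (\<Sum>k=1..n-1. of_nat (n - k) * u k)"
    by (subst sum.atLeastAtMost_rev) (auto intro!: sum.cong)
  then have "(\<Sum>k=1..n-1. of_nat k * (u k + u (n - k))) = (\<Sum>k=1..n-1. (of_nat k + of_nat (n - k)) * u k)"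
    by (simp add: algebra_simps sum.distrib)
  also have "\<dots> = (\<Sum>k=1..n-1. of_nat n * u k)"
    by (intro sum.cong refl) (auto simp flip: of_nat_add)
  finally show ?thesis by (simp add: sum_distrib_left)
qed

lemma binomial_mult_fact_split:
  assumes "1 \<le> k" "k \<le> n - 1"
  shows "real (n - 1 choose (k - 1)) * (fact k * fact (n - k)) = fact (n - 1) * real k"
proof -
  have "fact (k - 1) * fact (n - 1 - (k - 1)) * (n - 1 choose (k - 1)) = (fact (n - 1) :: nat)"
    using assms by (intro binomial_fact_lemma) simp
  moreover have "n - 1 - (k - 1) = n - k" using assms by simp
  ultimately have "fact (k - 1) * fact (n - k) * real (n - 1 choose (k - 1)) = fact (n - 1)"
    by (metis of_nat_fact of_nat_mult)
  moreover have "fact k = real k * fact (k - 1)"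
    using assms by (cases k) simp_all
  ultimately show ?thesis by (simp add: algebra_simps)
qed

section \<open>Phylogenetic trees on a set of labels\<close>

definition trees :: "nat set \<Rightarrow> ptree set" where
  "trees S = {t. canonical t \<and> leaves t = S}"

lemma phylo_trees_eq_trees: "phylo_trees n = trees {1..n}"
  by (simp add: phylo_trees_def trees_def)

lemma finite_leaves [simp]: "finite (leaves t)"
  by (induction t) auto

lemma leaves_nonempty [simp]: "leaves t \<noteq> {}"
  by (induction t) auto

lemma trees_singleton: "trees {a} = {Leaf a}"
proof -
  have "t = Leaf a" if "canonical t" "leaves t = {a}" for t
  proof (cases t)
    case (Node l r)
    then have "leaves l \<inter> leaves r = {}" "leaves l \<subseteq> {a}" "leaves r \<subseteq> {a}"
      using that by auto
    then show ?thesis using leaves_nonempty[of l] leaves_nonempty[of r] by blast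
  qed (use that in auto)
  then show ?thesis by (auto simp: trees_def)
qed

text \<open>The leaf sets of the left subtree of the root: by canonicity it carries the least label.\<close>
definition root_splits :: "nat set \<Rightarrow> nat set set" where
  "root_splits S = {A. A \<subseteq> S \<and> Min S \<in> A \<and> A \<noteq> S}"

lemma root_splits_card:
  assumes "A \<in> root_splits S" "finite S"
  shows "finite A" "A \<noteq> {}" "S - A \<noteq> {}" "card A < card S"
    "card (S - A) < card S" "card (S - A) = card S - card A"
proof -
  have A: "A \<subseteq> S" "Min S \<in> A" "A \<noteq> S" using assms(1) by (auto simp: root_splits_def)
  then show "finite A" "A \<noteq> {}" "S - A \<noteq> {}" using assms(2) finite_subset by auto
  show "card A < card S" using A assms(2) by (auto intro: psubset_card_mono)
  show "card (S - A) < card S" using A assms(2) by (auto intro: psubset_card_mono)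
  show "card (S - A) = card S - card A" using A assms(2) by (auto intro: card_Diff_subset finite_subset)
qed

lemma trees_eq_Node_image:
  assumes "finite S" "card S \<ge> 2"
  shows "trees S = (\<lambda>(A, l, r). Node l r) ` (SIGMA A:root_splits S. trees A \<times> trees (S - A))"
proof (intro equalityI subsetI)
  fix t assume t: "t \<in> trees S"
  show "t \<in> (\<lambda>(A, l, r). Node l r) ` (SIGMA A:root_splits S. trees A \<times> trees (S - A))"
  proof (cases t)
    case (Leaf i)
    then show ?thesis using t assms by (auto simp: trees_def)
  next
    case (Node l r)
    have c: "canonical l" "canonical r" "leaves l \<inter> leaves r = {}"
      "Min (leaves l) < Min (leaves r)" and S: "S = leaves l \<union> leaves r"
      using t Node by (auto simp: trees_def)
    have "Min S = min (Min (leaves l)) (Min (leaves r))"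
      unfolding S by (rule Min_Un) auto
    then have "Min S = Min (leaves l)" using c(4) by simp
    moreover have "leaves l \<noteq> S"
    proof
      assume "leaves l = S"
      then have "leaves r \<subseteq> leaves l" using S by auto
      then show False using c(3) leaves_nonempty[of r] by blast
    qed
    ultimately have "leaves l \<in> root_splits S"
      unfolding root_splits_def using S by auto
    moreover have "S - leaves l = leaves r" using S c by auto
    ultimately show ?thesis using Node c
      by (auto simp: trees_def image_iff intro!: bexI[of _ "(leaves l, l, r)"])
  qed
next
  fix t assume "t \<in> (\<lambda>(A, l, r). Node l r) ` (SIGMA A:root_splits S. trees A \<times> trees (S - A))"
  then obtain A l r where t: "t = Node l r" and A: "A \<in> root_splits S"
    and l: "l \<in> trees A" and r: "r \<in> trees (S - A)" by auto
  have A_sub: "Min S \<in> A" "A \<subseteq> S" using A by (auto simp: root_splits_def)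
  note A_card = root_splits_card[OF A assms(1)]
  have "Min A = Min S"
    using A_sub A_card(1) assms(1) by (metis Min_antimono Min_le empty_iff le_antisym)
  moreover have "Min S < Min (S - A)"
  proof -
    have "Min (S - A) \<in> S - A" using A_card(3) assms(1) by (intro Min_in) auto
    then have "Min S \<le> Min (S - A)" "Min (S - A) \<noteq> Min S" using assms(1) A_sub by auto
    then show ?thesis by simp
  qed
  ultimately show "t \<in> trees S" using l r t A_sub by (auto simp: trees_def)
qed

lemma Node_in_trees:
  assumes "finite S" "A \<in> root_splits S" "l \<in> trees A" "r \<in> trees (S - A)"
  shows "Node l r \<in> trees S"
proof -
  note A = root_splits_card[OF assms(2,1)]
  then have "card S \<ge> 2" using card_gt_0_iff[of A] by linarith
  then show ?thesis using trees_eq_Node_image[OF assms(1)] assms(2-4) by (auto simp: image_iff)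
qed

lemma finite_trees: "finite S \<Longrightarrow> finite (trees S)"
proof (induction "card S" arbitrary: S rule: less_induct)
  case less
  show ?case
  proof (cases "card S \<ge> 2")
    case True
    have "finite (SIGMA A:root_splits S. trees A \<times> trees (S - A))"
    proof (rule finite_SigmaI)
      show "finite (root_splits S)" using less.prems by (auto simp: root_splits_def)
    next
      fix A assume "A \<in> root_splits S"
      note A = root_splits_card[OF this less.prems]
      show "finite (trees A \<times> trees (S - A))"
        using less.hyps[of A] less.hyps[of "S - A"] less.prems A by auto
    qed
    then show ?thesis using trees_eq_Node_image[OF less.prems True] by simp
  next
    case False
    then have "card S = 0 \<or> card S = 1" by auto
    moreover have "trees {} = {}" by (simp add: trees_def)
    ultimately show ?thesis using less.prems
      by (auto simp: card_1_singleton_iff trees_singleton)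
  qed
qed

lemma sum_root_splits_by_card:
  fixes g :: "nat \<Rightarrow> 'a::comm_ring_1"
  assumes "finite S" "card S \<ge> 2"
  shows "(\<Sum>A\<in>root_splits S. g (card A)) =
    (\<Sum>k=1..card S - 1. of_nat (card S - 1 choose (k - 1)) * g k)"
proof -
  define m where "m = Min S"
  define S' where "S' = S - {m}"
  have m: "m \<in> S" unfolding m_def using assms by (intro Min_in) auto
  have S': "finite S'" "card S' = card S - 1" unfolding S'_def using m assms by auto
  have splits: "root_splits S = insert m ` (Pow S' - {S'})"
  proof (intro equalityI subsetI)
    fix A assume "A \<in> root_splits S"
    then have "A = insert m (A - {m})" "A - {m} \<in> Pow S' - {S'}"
      unfolding root_splits_def S'_def m_def[symmetric] using m by auto
    then show "A \<in> insert m ` (Pow S' - {S'})" by blast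
  next
    fix A assume "A \<in> insert m ` (Pow S' - {S'})"
    then obtain B where "A = insert m B" "B \<subseteq> S'" "B \<noteq> S'" by auto
    then show "A \<in> root_splits S" unfolding root_splits_def S'_def m_def[symmetric] using m by auto
  qed
  have inj: "inj_on (insert m) (Pow S' - {S'})"
    unfolding S'_def by (auto simp: inj_on_def)
  have card_insert: "card (insert m B) = Suc (card B)" if "B \<in> Pow S'" for B
  proof -
    have "finite B" "m \<notin> B" using that S'(1) by (auto simp: S'_def intro: finite_subset)
    then show ?thesis by simp
  qed
  have sum_Pow: "(\<Sum>B\<in>Pow S'. g (Suc (card B))) =
      (\<Sum>j=0..<card S'. of_nat (card S' choose j) * g (Suc j)) + g (Suc (card S'))"
    unfolding sum_Pow_by_card[OF S'(1), of "\<lambda>j. g (Suc j)"]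
    by (simp add: atLeastLessThanSuc_atLeastAtMost[symmetric])
  have "(\<Sum>A\<in>root_splits S. g (card A)) = (\<Sum>B\<in>Pow S' - {S'}. g (Suc (card B)))"
    unfolding splits by (simp add: sum.reindex[OF inj] card_insert)
  also have "\<dots> = (\<Sum>j=0..<card S'. of_nat (card S' choose j) * g (Suc j))"
    by (subst sum_diff1) (use S' sum_Pow in auto)
  also have "\<dots> =
      (\<Sum>k=Suc 0..<Suc (card S'). of_nat (card S' choose (k - 1)) * g k)"
    by (subst sum.shift_bounds_Suc_ivl) simp
  also have "\<dots> = (\<Sum>k=1..card S - 1. of_nat (card S - 1 choose (k - 1)) * g k)"
    using S'(2) assms(2) by (intro sum.cong) auto
  finally show ?thesis .
qed

lemma sum_trees_by_split_size:
  fixes F :: "ptree \<Rightarrow> 'a::comm_ring_1"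
  assumes S: "finite S" "card S = n" "n \<ge> 2"
    and split: "\<And>A. A \<in> root_splits S \<Longrightarrow>
      (\<Sum>l\<in>trees A. \<Sum>r\<in>trees (S - A). F (Node l r)) = G (card A)"
  shows "(\<Sum>t\<in>trees S. F t) = (\<Sum>k=1..n-1. of_nat (n - 1 choose (k - 1)) * G k)"
proof -
  have inj: "inj_on (\<lambda>(A, l, r). Node l r) (SIGMA A:root_splits S. trees A \<times> trees (S - A))"
    by (auto simp: inj_on_def trees_def)
  have fin: "finite (root_splits S)" using S by (auto simp: root_splits_def)
  have "(\<Sum>t\<in>trees S. F t) = (\<Sum>(A, l, r)\<in>(SIGMA A:root_splits S. trees A \<times> trees (S - A)). F (Node l r))"
    unfolding trees_eq_Node_image[OF S(1) S(3)[folded S(2)]] sum.reindex[OF inj]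
    by (simp add: case_prod_beta)
  also have "\<dots> = (\<Sum>A\<in>root_splits S. \<Sum>l\<in>trees A. \<Sum>r\<in>trees (S - A). F (Node l r))"
    using fin root_splits_card(1)[OF _ S(1)] finite_trees S(1)
    by (subst sum.Sigma[symmetric]) (auto simp: sum.cartesian_product split_def)
  also have "\<dots> = (\<Sum>A\<in>root_splits S. G (card A))"
    by (rule sum.cong) (auto simp: split)
  finally show ?thesis
    using sum_root_splits_by_card[OF S(1)] S by simp
qed

section \<open>Depths of lowest common ancestors\<close>

definition le_pairs :: "nat set \<Rightarrow> (nat \<times> nat) set" where
  "le_pairs S = {(i, j). i \<in> S \<and> j \<in> S \<and> i \<le> j}"

definition triangular :: "nat \<Rightarrow> real" where
  "triangular k = real k * (real k + 1) / 2"

definition lca_moment :: "nat \<Rightarrow> ptree \<Rightarrow> real" where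
  "lca_moment p t = (\<Sum>(i, j)\<in>le_pairs (leaves t). real (lca_depth t i j) ^ p)"

lemma finite_le_pairs [simp]: "finite S \<Longrightarrow> finite (le_pairs S)"
  by (rule finite_subset[of _ "S \<times> S"]) (auto simp: le_pairs_def)

lemma card_le_pairs:
  assumes "finite S"
  shows "real (card (le_pairs S)) = triangular (card S)"
proof -
  let ?P = "le_pairs S" and ?Q = "prod.swap ` le_pairs S"
  have "?P \<union> ?Q = S \<times> S" "?P \<inter> ?Q = (\<lambda>x. (x, x)) ` S"
    by (auto simp: le_pairs_def image_iff)
  moreover have "card ?Q = card ?P" "card ((\<lambda>x. (x, x)) ` S) = card S"
    by (auto intro!: card_image simp: inj_on_def)
  moreover have "card ?P + card ?Q = card (?P \<union> ?Q) + card (?P \<inter> ?Q)"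
    by (rule card_Un_Int) (use assms in auto)
  ultimately have "2 * card ?P = card S * card S + card S"
    by (simp add: card_cartesian_product)
  then have "2 * real (card ?P) = real (card S) * real (card S) + real (card S)"
    by (metis of_nat_add of_nat_mult of_nat_numeral)
  then show ?thesis unfolding triangular_def by (simp add: field_simps)
qed

lemma lca_moment_Leaf: "p > 0 \<Longrightarrow> lca_moment p (Leaf a) = 0"
  by (simp add: lca_moment_def le_pairs_def)

text \<open>Pairs separated by the root contribute nothing; all other pairs gain depth one.\<close>
lemma lca_moment_Node:
  assumes c: "canonical (Node l r)" and p: "p > 0"
  shows "lca_moment p (Node l r) =
    (\<Sum>(i, j)\<in>le_pairs (leaves l). (1 + real (lca_depth l i j)) ^ p) +
    (\<Sum>(i, j)\<in>le_pairs (leaves r). (1 + real (lca_depth r i j)) ^ p)"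
proof -
  let ?L = "leaves l" and ?R = "leaves r"
  let ?fl = "\<lambda>(i, j). (1 + real (lca_depth l i j)) ^ p"
  let ?fr = "\<lambda>(i, j). (1 + real (lca_depth r i j)) ^ p"
  have disj: "?L \<inter> ?R = {}" using c by simp
  have "lca_moment p (Node l r) =
      (\<Sum>x\<in>le_pairs (?L \<union> ?R). (if x \<in> le_pairs ?L then ?fl x else 0)
                                + (if x \<in> le_pairs ?R then ?fr x else 0))"
    unfolding lca_moment_def using disj p
    by (intro sum.cong) (auto simp: le_pairs_def add.commute split: prod.splits)
  also have "\<dots> = (\<Sum>x\<in>le_pairs (?L \<union> ?R) \<inter> le_pairs ?L. ?fl x)
                + (\<Sum>x\<in>le_pairs (?L \<union> ?R) \<inter> le_pairs ?R. ?fr x)"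
    by (simp add: sum.distrib sum.inter_restrict)
  also have "le_pairs (?L \<union> ?R) \<inter> le_pairs ?L = le_pairs ?L" by (auto simp: le_pairs_def)
  also have "le_pairs (?L \<union> ?R) \<inter> le_pairs ?R = le_pairs ?R" by (auto simp: le_pairs_def)
  finally show ?thesis .
qed

lemma lca_moment1_Node:
  assumes "canonical (Node l r)"
  shows "lca_moment 1 (Node l r) = lca_moment 1 l + lca_moment 1 r
    + triangular (card (leaves l)) + triangular (card (leaves r))"
proof -
  have "(\<Sum>(i, j)\<in>le_pairs (leaves t). (1 + real (lca_depth t i j)) ^ 1)
      = lca_moment 1 t + triangular (card (leaves t))" for t
    by (simp add: lca_moment_def sum.distrib card_le_pairs[symmetric] case_prod_beta add.commute)
  then show ?thesis using lca_moment_Node[OF assms, of 1] by simp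
qed

lemma lca_moment2_Node:
  assumes "canonical (Node l r)"
  shows "lca_moment 2 (Node l r) = lca_moment 2 l + lca_moment 2 r
    + 2 * lca_moment 1 l + 2 * lca_moment 1 r
    + triangular (card (leaves l)) + triangular (card (leaves r))"
proof -
  have "(\<Sum>(i, j)\<in>le_pairs (leaves t). (1 + real (lca_depth t i j)) ^ 2)
      = lca_moment 2 t + 2 * lca_moment 1 t + triangular (card (leaves t))" for t
  proof -
    have "(\<Sum>(i, j)\<in>le_pairs (leaves t). (1 + real (lca_depth t i j)) ^ 2)
       = (\<Sum>(i, j)\<in>le_pairs (leaves t). real (lca_depth t i j) ^ 2 + 2 * real (lca_depth t i j) + 1)"
      by (intro sum.cong) (auto simp: power2_eq_square algebra_simps)
    then show ?thesis
      by (simp add: lca_moment_def sum.distrib card_le_pairs[symmetric] case_prod_beta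
          sum_distrib_left)
  qed
  then show ?thesis using lca_moment_Node[OF assms, of 2] by simp
qed

lemma Phi2_eq_lca_moment:
  assumes "t \<in> phylo_trees n"
  shows "real (Phi2 n t) = lca_moment 2 t"
proof -
  have "{(i, j). 1 \<le> i \<and> i \<le> j \<and> j \<le> n} = le_pairs (leaves t)"
    using assms by (auto simp: phylo_trees_def le_pairs_def)
  then show ?thesis
    by (simp add: Phi2_def lca_moment_def of_nat_sum case_prod_beta)
qed

section \<open>Sums over trees with multiplicative weights\<close>

text \<open>Both the Yule weights \<open>yule_prod\<close> and the uniform weight \<open>1\<close> are of this form.\<close>
locale multiplicative_weight =
  fixes w :: "ptree \<Rightarrow> real" and c :: "nat \<Rightarrow> real"
  assumes weight_Leaf: "w (Leaf a) = 1"
    and weight_Node: "canonical (Node l r) \<Longrightarrow>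
      w (Node l r) = c (card (leaves (Node l r))) * (w l * w r)"
begin

lemma sum_weight_Node:
  assumes S: "finite S" "card S = n" and A: "A \<in> root_splits S"
  shows "(\<Sum>l\<in>trees A. \<Sum>r\<in>trees (S - A). w (Node l r) * (P l + Q r)) =
    c n * ((\<Sum>l\<in>trees A. w l * P l) * (\<Sum>r\<in>trees (S - A). w r)
         + (\<Sum>l\<in>trees A. w l) * (\<Sum>r\<in>trees (S - A). w r * Q r))"
proof -
  have "w (Node l r) = c n * (w l * w r)" if "l \<in> trees A" "r \<in> trees (S - A)" for l r
    using weight_Node Node_in_trees[OF S(1) A that] S(2) by (simp add: trees_def)
  then have "(\<Sum>l\<in>trees A. \<Sum>r\<in>trees (S - A). w (Node l r) * (P l + Q r)) =
      c n * (\<Sum>l\<in>trees A. \<Sum>r\<in>trees (S - A). w l * w r * (P l + Q r))"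
    by (simp add: sum_distrib_left mult.assoc)
  then show ?thesis by (simp only: sum_sum_mult_add)
qed

lemma sum_weight_trees:
  assumes z1: "z 1 = 1"
    and z_rec: "\<And>n. n \<ge> 2 \<Longrightarrow>
      z n = c n * (\<Sum>k=1..n-1. real (n - 1 choose (k - 1)) * (z k * z (n - k)))"
  shows "finite S \<Longrightarrow> S \<noteq> {} \<Longrightarrow> (\<Sum>t\<in>trees S. w t) = z (card S)"
proof (induction "card S" arbitrary: S rule: less_induct)
  case less
  define n where "n = card S"
  show ?case
  proof (cases "n \<ge> 2")
    case False
    moreover have "n > 0" using less.prems by (simp add: n_def card_gt_0_iff)
    ultimately have "n = 1" by linarith
    then show ?thesis using z1 weight_Leaf by (auto simp: n_def card_1_singleton_iff trees_singleton)
  next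
    case True
    have split: "(\<Sum>l\<in>trees A. \<Sum>r\<in>trees (S - A). w (Node l r)) = c n * (z (card A) * z (n - card A))"
      if A: "A \<in> root_splits S" for A
    proof -
      note A' = root_splits_card[OF A less.prems(1)]
      have "(\<Sum>l\<in>trees A. \<Sum>r\<in>trees (S - A). w (Node l r)) =
          c n * ((\<Sum>l\<in>trees A. w l) * (\<Sum>r\<in>trees (S - A). w r))"
        using sum_weight_Node[OF less.prems(1) n_def[symmetric] A, of "\<lambda>_. 1" "\<lambda>_. 0"] by simp
      then show ?thesis using less.hyps[of A] less.hyps[of "S - A"] A' less.prems
        by (simp add: n_def)
    qed
    have "(\<Sum>t\<in>trees S. w t) =
        (\<Sum>k=1..n-1. real (n - 1 choose (k - 1)) * (c n * (z k * z (n - k))))"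
      by (rule sum_trees_by_split_size[OF less.prems(1) n_def[symmetric] True, where G = "\<lambda>k. c n * (z k * z (n - k))"])
        (rule split)
    also have "\<dots> = z n" by (simp add: z_rec[OF True] sum_distrib_left mult_ac)
    finally show ?thesis by (simp add: n_def)
  qed
qed

lemma sum_weight_additive_trees:
  assumes total: "\<And>A. finite A \<Longrightarrow> A \<noteq> {} \<Longrightarrow> (\<Sum>t\<in>trees A. w t) = z (card A)"
    and Z: "\<And>A. finite A \<Longrightarrow> A \<noteq> {} \<Longrightarrow> (\<Sum>t\<in>trees A. w t * Z t) = h (card A)"
    and X_Leaf: "\<And>a. X (Leaf a) = 0"
    and X_Node: "\<And>l r. canonical (Node l r) \<Longrightarrow> X (Node l r) =
      (X l + Z l + a (card (leaves l))) + (X r + Z r + a (card (leaves r)))"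
    and f1: "f 1 = 0"
    and f_rec: "\<And>n. n \<ge> 2 \<Longrightarrow> f n = c n * (\<Sum>k=1..n-1. real (n - 1 choose (k - 1)) *
      ((f k + h k + a k * z k) * z (n - k) + z k * (f (n - k) + h (n - k) + a (n - k) * z (n - k))))"
  shows "finite S \<Longrightarrow> S \<noteq> {} \<Longrightarrow> (\<Sum>t\<in>trees S. w t * X t) = f (card S)"
proof (induction "card S" arbitrary: S rule: less_induct)
  case less
  define n where "n = card S"
  define Q where "Q t = X t + Z t + a (card (leaves t))" for t
  have sum_Q: "(\<Sum>t\<in>trees A. w t * Q t) = f (card A) + h (card A) + a (card A) * z (card A)"
    if "finite A" "A \<noteq> {}" "card A < n" for A
  proof -
    have "(\<Sum>t\<in>trees A. w t * Q t) =
        (\<Sum>t\<in>trees A. w t * X t) + (\<Sum>t\<in>trees A. w t * Z t) + a (card A) * (\<Sum>t\<in>trees A. w t)"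
      by (simp add: Q_def trees_def algebra_simps sum.distrib sum_distrib_left)
    then show ?thesis using less.hyps[of A] Z[of A] total[of A] that by (simp add: n_def)
  qed
  show ?case
  proof (cases "n \<ge> 2")
    case False
    moreover have "n > 0" using less.prems by (simp add: n_def card_gt_0_iff)
    ultimately have "n = 1" by linarith
    then show ?thesis using f1 X_Leaf by (auto simp: n_def card_1_singleton_iff trees_singleton)
  next
    case True
    have split: "(\<Sum>l\<in>trees A. \<Sum>r\<in>trees (S - A). w (Node l r) * X (Node l r)) =
        c n * ((f (card A) + h (card A) + a (card A) * z (card A)) * z (n - card A)
          + z (card A) * (f (n - card A) + h (n - card A) + a (n - card A) * z (n - card A)))"
      if A: "A \<in> root_splits S" for A
    proof -
      note A' = root_splits_card[OF A less.prems(1)]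
      have "X (Node l r) = Q l + Q r" if "l \<in> trees A" "r \<in> trees (S - A)" for l r
        using X_Node Node_in_trees[OF less.prems(1) A that] by (simp add: Q_def trees_def)
      then have "(\<Sum>l\<in>trees A. \<Sum>r\<in>trees (S - A). w (Node l r) * X (Node l r)) =
          (\<Sum>l\<in>trees A. \<Sum>r\<in>trees (S - A). w (Node l r) * (Q l + Q r))"
        by simp
      then show ?thesis
        using sum_weight_Node[OF less.prems(1) n_def[symmetric] A] A' less.prems
          sum_Q[of A] sum_Q[of "S - A"] total[of A] total[of "S - A"]
        by (simp add: n_def)
    qed
    have "(\<Sum>t\<in>trees S. w t * X t) = (\<Sum>k=1..n-1. real (n - 1 choose (k - 1)) *
        (c n * ((f k + h k + a k * z k) * z (n - k) + z k * (f (n - k) + h (n - k) + a (n - k) * z (n - k)))))"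
      by (rule sum_trees_by_split_size[OF less.prems(1) n_def[symmetric] True, where
          G = "\<lambda>k. c n * ((f k + h k + a k * z k) * z (n - k) + z k * (f (n - k) + h (n - k) + a (n - k) * z (n - k)))"])
        (rule split)
    also have "\<dots> = f n" by (simp add: f_rec[OF True] sum_distrib_left mult_ac)
    finally show ?thesis by (simp add: n_def)
  qed
qed

end

section \<open>The Yule model\<close>

text \<open>\<open>yule_total n\<close> is the sum of \<open>yule_prod\<close> over the trees on \<open>n\<close> labels, so that
  \<open>P_Y\<close> is a probability; \<open>yule_mean1\<close> and \<open>yule_mean2\<close> are the Yule expectations of the sums
  of \<open>\<phi>\<close> and of \<open>\<phi>\<^sup>2\<close>.\<close>
definition yule_total :: "nat \<Rightarrow> real" where
  "yule_total n = fact n / 2 ^ (n - 1)"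

definition yule_mean1 :: "nat \<Rightarrow> real" where
  "yule_mean1 n = real n * (real n - 1)"

definition yule_mean2 :: "nat \<Rightarrow> real" where
  "yule_mean2 n = real n * (5 * (real n - 1) - 8 * (harm n - 1))"

text \<open>The Yule weight of the trees whose left subtree has \<open>k\<close> leaves is proportional to \<open>k\<close>;
  symmetrising in \<open>k\<close> and \<open>n - k\<close> turns the root split recursion into the classical recurrence
  \<open>(n - 1) E n = 2 (g 1 + \<dots> + g (n - 1))\<close>.\<close>
lemma yule_convolution:
  assumes n: "n \<ge> 2" and rec: "real (n - 1) * E n = 2 * (\<Sum>k=1..n-1. g k)"
  shows "yule_total n * E n = 1 / (real n - 1) *
    (\<Sum>k=1..n-1. real (n - 1 choose (k - 1)) * (yule_total k * yule_total (n - k) * (g k + g (n - k))))"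
proof -
  have weight: "real (n - 1 choose (k - 1)) * (yule_total k * yule_total (n - k))
      = fact (n - 1) / 2 ^ (n - 2) * real k" if "k \<in> {1..n-1}" for k
  proof -
    have "k - 1 + (n - k - 1) = n - 2" using that by auto
    then have "(2::real) ^ (k - 1) * 2 ^ (n - k - 1) = 2 ^ (n - 2)"
      by (metis power_add)
    then show ?thesis using binomial_mult_fact_split[of k n] that
      by (simp add: yule_total_def field_simps)
  qed
  have "(\<Sum>k=1..n-1. real (n - 1 choose (k - 1)) * (yule_total k * yule_total (n - k) * (g k + g (n - k))))
      = fact (n - 1) / 2 ^ (n - 2) * (\<Sum>k=1..n-1. real k * (g k + g (n - k)))"
  proof -
    have "real (n - 1 choose (k - 1)) * (yule_total k * yule_total (n - k) * (g k + g (n - k)))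
        = fact (n - 1) / 2 ^ (n - 2) * (real k * (g k + g (n - k)))" if "k \<in> {1..n-1}" for k
      using weight[OF that] by (metis mult.assoc)
    then show ?thesis by (simp add: sum_distrib_left)
  qed
  also have "\<dots> = fact (n - 1) / 2 ^ (n - 2) * (real n * (\<Sum>k=1..n-1. g k))"
    by (simp only: sum_mult_index_symmetric)
  also have "(\<Sum>k=1..n-1. g k) = real (n - 1) * E n / 2"
    using rec by simp
  also have "fact (n - 1) / 2 ^ (n - 2) * (real n * (real (n - 1) * E n / 2))
      = (real n - 1) * (yule_total n * E n)"
  proof -
    obtain m where "n = m + 2" using le_Suc_ex[OF n] by (auto simp: add.commute)
    then show ?thesis by (simp add: yule_total_def field_simps)
  qed
  finally show ?thesis using n by simp
qed

lemma yule_mean1_rec: "real m * yule_mean1 (m + 1) = 2 * (\<Sum>k=1..m. yule_mean1 k + triangular k)"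
  by (induction m) (auto simp: yule_mean1_def triangular_def field_simps)

lemma yule_mean2_rec:
  "real m * yule_mean2 (m + 1) = 2 * (\<Sum>k=1..m. yule_mean2 k + 2 * yule_mean1 k + triangular k)"
proof (induction m)
  case (Suc m)
  define H :: real where "H = harm (Suc m)"
  have harm: "harm (Suc (Suc m)) = H + 1 / (real m + 2)"
    unfolding H_def by (simp add: harm_Suc divide_inverse add.commute)
  have "real (Suc m) * yule_mean2 (Suc (Suc m)) = real m * yule_mean2 (Suc m)
      + 2 * (yule_mean2 (Suc m) + 2 * yule_mean1 (Suc m) + triangular (Suc m))"
    unfolding yule_mean2_def yule_mean1_def triangular_def harm H_def[symmetric]
    by (simp add: field_simps)
  then show ?case using Suc.IH by simp
qed simp

interpretation yule: multiplicative_weight yule_prod "\<lambda>n. 1 / (real n - 1)"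
  by unfold_locales (simp_all add: card_Un_disjoint)

lemma sum_yule_prod_trees:
  assumes "finite S" "S \<noteq> {}"
  shows "(\<Sum>t\<in>trees S. yule_prod t) = yule_total (card S)"
proof -
  have z_rec: "yule_total n = 1 / (real n - 1) * (\<Sum>k=1..n-1. real (n - 1 choose (k - 1)) *
      (yule_total k * yule_total (n - k)))" if "n \<ge> 2" for n
    using yule_convolution[OF that, of "\<lambda>_. 1" "\<lambda>_. 1 / 2"] that by simp
  show ?thesis
    by (rule yule.sum_weight_trees[OF _ z_rec assms]) (simp add: yule_total_def)
qed

lemma sum_yule_additive_trees:
  assumes Z: "\<And>A. finite A \<Longrightarrow> A \<noteq> {} \<Longrightarrow>
      (\<Sum>t\<in>trees A. yule_prod t * Z t) = yule_total (card A) * M (card A)"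
    and X_Leaf: "\<And>i. X (Leaf i) = 0"
    and X_Node: "\<And>l r. canonical (Node l r) \<Longrightarrow> X (Node l r) =
      (X l + Z l + a (card (leaves l))) + (X r + Z r + a (card (leaves r)))"
    and E_1: "E 1 = 0"
    and E_rec: "\<And>m. real m * E (m + 1) = 2 * (\<Sum>k=1..m. E k + M k + a k)"
    and S: "finite S" "S \<noteq> {}"
  shows "(\<Sum>t\<in>trees S. yule_prod t * X t) = yule_total (card S) * E (card S)"
proof -
  have f_rec: "yule_total n * E n = 1 / (real n - 1) * (\<Sum>k=1..n-1. real (n - 1 choose (k - 1)) *
      ((yule_total k * E k + yule_total k * M k + a k * yule_total k) * yule_total (n - k)
      + yule_total k * (yule_total (n - k) * E (n - k) + yule_total (n - k) * M (n - k)
        + a (n - k) * yule_total (n - k))))" if "n \<ge> 2" for n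
    using yule_convolution[OF that, of E "\<lambda>k. E k + M k + a k"] E_rec[of "n - 1"] that
    by (simp add: algebra_simps)
  have f_1: "yule_total 1 * E 1 = 0" using E_1 by simp
  show ?thesis
    by (rule yule.sum_weight_additive_trees[where f = "\<lambda>n. yule_total n * E n",
          OF sum_yule_prod_trees Z X_Leaf X_Node f_1 f_rec S])
qed

lemma sum_yule_lca_moment1:
  assumes "finite S" "S \<noteq> {}"
  shows "(\<Sum>t\<in>trees S. yule_prod t * lca_moment 1 t) = yule_total (card S) * yule_mean1 (card S)"
proof (rule sum_yule_additive_trees[where Z = "\<lambda>_. 0" and M = "\<lambda>_. 0" and a = triangular,
      OF _ _ _ _ _ assms])
  show "lca_moment 1 (Node l r) = (lca_moment 1 l + 0 + triangular (card (leaves l)))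
      + (lca_moment 1 r + 0 + triangular (card (leaves r)))" if "canonical (Node l r)" for l r
    using lca_moment1_Node[OF that] by simp
  show "real m * yule_mean1 (m + 1) = 2 * (\<Sum>k=1..m. yule_mean1 k + 0 + triangular k)" for m
    using yule_mean1_rec[of m] by simp
qed (simp_all add: lca_moment_Leaf yule_mean1_def)

lemma sum_yule_lca_moment2:
  assumes "finite S" "S \<noteq> {}"
  shows "(\<Sum>t\<in>trees S. yule_prod t * lca_moment 2 t) = yule_total (card S) * yule_mean2 (card S)"
proof (rule sum_yule_additive_trees[where Z = "\<lambda>t. 2 * lca_moment 1 t"
      and M = "\<lambda>k. 2 * yule_mean1 k" and a = triangular, OF _ _ _ _ _ assms])
  show "(\<Sum>t\<in>trees A. yule_prod t * (2 * lca_moment 1 t)) = yule_total (card A) * (2 * yule_mean1 (card A))"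
    if "finite A" "A \<noteq> {}" for A
  proof -
    have "(\<Sum>t\<in>trees A. yule_prod t * (2 * lca_moment 1 t)) = 2 * (\<Sum>t\<in>trees A. yule_prod t * lca_moment 1 t)"
      by (simp add: sum_distrib_left algebra_simps)
    then show ?thesis using sum_yule_lca_moment1[OF that] by simp
  qed
  show "lca_moment 2 (Node l r) = (lca_moment 2 l + 2 * lca_moment 1 l + triangular (card (leaves l)))
      + (lca_moment 2 r + 2 * lca_moment 1 r + triangular (card (leaves r)))"
    if "canonical (Node l r)" for l r
    using lca_moment2_Node[OF that] by simp
  show "real m * yule_mean2 (m + 1) = 2 * (\<Sum>k=1..m. yule_mean2 k + 2 * yule_mean1 k + triangular k)" for m
    by (rule yule_mean2_rec)
qed (simp_all add: lca_moment_Leaf yule_mean2_def harm_def)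

lemma E_Y_Phi2_eq:
  assumes "n \<ge> 1"
  shows "E_Y_Phi2 n = yule_mean2 n"
proof -
  have "E_Y_Phi2 n = 2 ^ (n - 1) / fact n * (\<Sum>t\<in>trees {1..n}. yule_prod t * lca_moment 2 t)"
    unfolding E_Y_Phi2_def P_Y_def sum_distrib_left
    by (intro sum.cong) (simp_all add: phylo_trees_eq_trees Phi2_eq_lca_moment)
  also have "\<dots> = yule_mean2 n"
    using sum_yule_lca_moment2[of "{1..n}"] assms by (simp add: yule_total_def)
  finally show ?thesis .
qed

section \<open>Powers of \<open>1 - 2x\<close>\<close>

definition one_minus_2X_pow :: "real \<Rightarrow> real fps" where
  "one_minus_2X_pow a = fps_binomial a oo (fps_const (-2) * fps_X)"

lemma one_minus_2X_pow_nth: "fps_nth (one_minus_2X_pow a) n = (-2) ^ n * (a gchoose n)"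
  by (simp add: one_minus_2X_pow_def)

lemma one_minus_2X_pow_0 [simp]: "one_minus_2X_pow 0 = 1"
  by (simp add: one_minus_2X_pow_def)

lemma one_minus_2X_pow_add: "one_minus_2X_pow (a + b) = one_minus_2X_pow a * one_minus_2X_pow b"
  by (simp add: one_minus_2X_pow_def fps_binomial_add_mult fps_compose_mult_distrib)

lemma one_minus_2X_pow_power: "one_minus_2X_pow a ^ m = one_minus_2X_pow (real m * a)"
  by (simp add: one_minus_2X_pow_def fps_compose_power fps_binomial_power)

lemma one_minus_2X_pow_nth_minus_one:
  "a \<noteq> 0 \<Longrightarrow> fps_nth (one_minus_2X_pow (a - 1)) k = (a - real k) / a * fps_nth (one_minus_2X_pow a) k"
proof -
  assume "a \<noteq> 0"
  have "(a - real k) * (a gchoose k) = a * ((a - 1) gchoose k)" by (rule gbinomial_absorb_comp)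
  then have "(a - 1) gchoose k = (a - real k) * (a gchoose k) / a"
    using \<open>a \<noteq> 0\<close> by (simp add: field_simps)
  then show ?thesis by (simp add: one_minus_2X_pow_nth)
qed

lemma one_minus_2X_pow_nth_Suc:
  "real (Suc k) * fps_nth (one_minus_2X_pow a) (Suc k) = - 2 * (a - real k) * fps_nth (one_minus_2X_pow a) k"
proof -
  have h: "real (Suc k) * (a gchoose Suc k) = (a - real k) * (a gchoose k)"
    using gbinomial_absorption[of k a] gbinomial_absorb_comp[of a k] by simp
  have "real (Suc k) * fps_nth (one_minus_2X_pow a) (Suc k)
      = (-2) ^ Suc k * (real (Suc k) * (a gchoose Suc k))"
    by (simp add: one_minus_2X_pow_nth algebra_simps)
  also have "\<dots> = (-2) ^ Suc k * ((a - real k) * (a gchoose k))" by (simp only: h)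
  finally show ?thesis by (simp add: one_minus_2X_pow_nth algebra_simps)
qed

lemma one_minus_2X_pow_nth_neg_nat:
  assumes "m \<ge> 1"
  shows "fps_nth (one_minus_2X_pow (- real m)) n = real (m + n - 1 choose n) * 2 ^ n"
proof -
  have "fps_nth (one_minus_2X_pow (- real m)) n = (-2) ^ n * ((- real m) gchoose n)"
    by (rule one_minus_2X_pow_nth)
  also have "(- real m) gchoose n = (-1) ^ n * ((real m + real n - 1) gchoose n)"
    by (rule gbinomial_minus)
  also have "real m + real n - 1 = real (m + n - 1)" using assms by simp
  also have "real (m + n - 1) gchoose n = real (m + n - 1 choose n)"
    by (rule binomial_gbinomial[symmetric])
  finally show ?thesis by (simp add: power_mult_distrib[symmetric])
qed

lemma one_minus_2X_pow_half_nth: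
  fixes n :: nat defines "b \<equiv> fps_nth (one_minus_2X_pow (1/2)) n"
  shows "fps_nth (one_minus_2X_pow (- (1/2))) n = (1 - 2 * real n) * b"
    and "fps_nth (one_minus_2X_pow (- (3/2))) n = (1 + 2 * real n) * (1 - 2 * real n) * b"
    and "fps_nth (one_minus_2X_pow (- (5/2))) n = (3 + 2 * real n) * (1 + 2 * real n) * (1 - 2 * real n) / 3 * b"
proof -
  show 1: "fps_nth (one_minus_2X_pow (- (1/2))) n = (1 - 2 * real n) * b"
    using one_minus_2X_pow_nth_minus_one[of "1/2" n] by (simp add: b_def field_simps)
  have "fps_nth (one_minus_2X_pow (- (3/2))) n = (1 + 2 * real n) * fps_nth (one_minus_2X_pow (- (1/2))) n"
    using one_minus_2X_pow_nth_minus_one[of "- (1/2)" n] by (simp add: field_simps)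
  then show 3: "fps_nth (one_minus_2X_pow (- (3/2))) n = (1 + 2 * real n) * (1 - 2 * real n) * b"
    using 1 by simp
  have "fps_nth (one_minus_2X_pow (- (5/2))) n = (3 + 2 * real n) / 3 * fps_nth (one_minus_2X_pow (- (3/2))) n"
    using one_minus_2X_pow_nth_minus_one[of "- (3/2)" n] by (simp add: field_simps)
  then show "fps_nth (one_minus_2X_pow (- (5/2))) n = (3 + 2 * real n) * (1 + 2 * real n) * (1 - 2 * real n) / 3 * b"
    using 3 by simp
qed

lemma fps_mult_nth_without_ends:
  fixes U V :: "'a::comm_semiring_0 fps"
  assumes "fps_nth U 0 = 0" "fps_nth V 0 = 0"
  shows "fps_nth (U * V) n = (\<Sum>k=1..n-1. fps_nth U k * fps_nth V (n - k))"
proof (cases n)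
  case (Suc m)
  have "fps_nth (U * V) n = (\<Sum>k=Suc 0..Suc m. fps_nth U k * fps_nth V (n - k))"
    using assms(1) by (simp add: fps_mult_nth Suc sum.atLeast_Suc_atMost)
  also have "\<dots> = (\<Sum>k=Suc 0..m. fps_nth U k * fps_nth V (n - k))"
    using assms(2) by (cases m) (simp_all add: Suc)
  finally show ?thesis by (simp add: Suc)
qed (use assms in \<open>simp add: fps_mult_nth\<close>)

text \<open>The product of exponential generating functions, in the form produced by splitting
  a labelled tree at its root.\<close>
lemma egf_convolution:
  assumes n: "n \<ge> 2" and U: "fps_nth U 0 = 0" and V: "fps_nth V 0 = 0"
  shows "(\<Sum>k=1..n-1. real (n - 1 choose (k - 1)) *
      (fact k * fps_nth U k * (fact (n - k) * fps_nth V (n - k))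
        + fact k * fps_nth V k * (fact (n - k) * fps_nth U (n - k))))
    = fact n * fps_nth (U * V) n"
proof -
  define u where "u k = fps_nth U k * fps_nth V (n - k)" for k
  have "real (n - 1 choose (k - 1)) *
      (fact k * fps_nth U k * (fact (n - k) * fps_nth V (n - k))
        + fact k * fps_nth V k * (fact (n - k) * fps_nth U (n - k)))
    = fact (n - 1) * (real k * (u k + u (n - k)))" if "k \<in> {1..n-1}" for k
  proof -
    have binom: "real (n - 1 choose (k - 1)) * (fact k * fact (n - k)) = fact (n - 1) * real k"
      using that by (intro binomial_mult_fact_split) auto
    have "real (n - 1 choose (k - 1)) *
        (fact k * fps_nth U k * (fact (n - k) * fps_nth V (n - k))
          + fact k * fps_nth V k * (fact (n - k) * fps_nth U (n - k)))
      = real (n - 1 choose (k - 1)) * (fact k * fact (n - k)) * (u k + u (n - k))"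
    proof -
      have "n - (n - k) = k" using that by auto
      then show ?thesis by (simp add: u_def algebra_simps)
    qed
    then show ?thesis unfolding binom by simp
  qed
  then have "(\<Sum>k=1..n-1. real (n - 1 choose (k - 1)) *
      (fact k * fps_nth U k * (fact (n - k) * fps_nth V (n - k))
        + fact k * fps_nth V k * (fact (n - k) * fps_nth U (n - k))))
    = fact (n - 1) * (\<Sum>k=1..n-1. real k * (u k + u (n - k)))"
    by (simp add: sum_distrib_left)
  also have "\<dots> = fact (n - 1) * real n * (\<Sum>k=1..n-1. u k)"
    by (simp only: sum_mult_index_symmetric mult.assoc)
  also have "\<dots> = fact n * fps_nth (U * V) n"
    using n by (simp add: u_def fps_mult_nth_without_ends[OF U V] fact_reduce[of n])
  finally show ?thesis .
qed

section \<open>The uniform model\<close>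

text \<open>\<open>1 - sqrt (1 - 2x)\<close>, the exponential generating function of the number of trees.\<close>
definition tree_egf :: "real fps" where
  "tree_egf = 1 - one_minus_2X_pow (1/2)"

definition pairs_egf :: "real fps" where
  "pairs_egf = Abs_fps (\<lambda>k. triangular k * fps_nth tree_egf k)"

definition moment1_egf :: "real fps" where
  "moment1_egf = pairs_egf * tree_egf * one_minus_2X_pow (- (1/2))"

definition moment2_egf :: "real fps" where
  "moment2_egf = (2 * moment1_egf + pairs_egf) * tree_egf * one_minus_2X_pow (- (1/2))"

lemma tree_egf_nth_0 [simp]: "fps_nth tree_egf 0 = 0"
  by (simp add: tree_egf_def one_minus_2X_pow_nth)

lemma tree_egf_nth: "n \<ge> 1 \<Longrightarrow> fps_nth tree_egf n = - fps_nth (one_minus_2X_pow (1/2)) n"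
  by (simp add: tree_egf_def)

lemma tree_egf_square_nth:
  assumes "n \<ge> 2"
  shows "fps_nth (tree_egf * tree_egf) n = 2 * fps_nth tree_egf n"
proof -
  have "(1::real) gchoose n = 0"
    using binomial_gbinomial[of 1 n, where 'a=real] assms by (simp add: binomial_eq_0)
  moreover have "tree_egf * tree_egf = 1 - 2 * one_minus_2X_pow (1/2) + one_minus_2X_pow 1"
    using one_minus_2X_pow_add[of "1/2" "1/2"] by (simp add: tree_egf_def algebra_simps)
  ultimately show ?thesis
    using assms by (simp add: tree_egf_def one_minus_2X_pow_nth numeral_fps_const)
qed

text \<open>The definitions of \<open>moment1_egf\<close> and \<open>moment2_egf\<close> solve \<open>F = (F + G) * tree_egf\<close>,
  using \<open>1 - tree_egf = sqrt (1 - 2x)\<close>.\<close>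
lemma moment1_egf_rec: "moment1_egf = (moment1_egf + pairs_egf) * tree_egf"
  and moment2_egf_rec: "moment2_egf = (moment2_egf + 2 * moment1_egf + pairs_egf) * tree_egf"
proof -
  have inv: "one_minus_2X_pow (1/2) * one_minus_2X_pow (- (1/2)) = 1"
    by (simp flip: one_minus_2X_pow_add)
  show "moment1_egf = (moment1_egf + pairs_egf) * tree_egf"
    using inv unfolding moment1_egf_def tree_egf_def by algebra
  show "moment2_egf = (moment2_egf + 2 * moment1_egf + pairs_egf) * tree_egf"
    using inv unfolding moment2_egf_def moment1_egf_def tree_egf_def by algebra
qed

interpretation uniform: multiplicative_weight "\<lambda>_. 1" "\<lambda>_. 1"
  by unfold_locales simp_all

lemma sum_trees_one:
  assumes "finite S" "S \<noteq> {}"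
  shows "(\<Sum>t\<in>trees S. 1) = fact (card S) * fps_nth tree_egf (card S)"
proof -
  have z_rec: "fact n * fps_nth tree_egf n = 1 * (\<Sum>k=1..n-1. real (n - 1 choose (k - 1)) *
      (fact k * fps_nth tree_egf k * (fact (n - k) * fps_nth tree_egf (n - k))))" if "n \<ge> 2" for n
  proof -
    have "2 * (\<Sum>k=1..n-1. real (n - 1 choose (k - 1)) *
        (fact k * fps_nth tree_egf k * (fact (n - k) * fps_nth tree_egf (n - k))))
      = 2 * (fact n * fps_nth tree_egf n)"
      using egf_convolution[OF that tree_egf_nth_0 tree_egf_nth_0] tree_egf_square_nth[OF that]
      by (simp add: sum_distrib_left algebra_simps)
    then show ?thesis by simp
  qed
  show ?thesis
    by (rule uniform.sum_weight_trees[where z = "\<lambda>n. fact n * fps_nth tree_egf n", OF _ z_rec assms])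
      (simp add: tree_egf_def one_minus_2X_pow_nth)
qed

lemma sum_uniform_additive_trees:
  assumes Z: "\<And>A. finite A \<Longrightarrow> A \<noteq> {} \<Longrightarrow> (\<Sum>t\<in>trees A. Z t) = fact (card A) * fps_nth M (card A)"
    and M_0: "fps_nth M 0 = 0"
    and X_Leaf: "\<And>i. X (Leaf i) = 0"
    and X_Node: "\<And>l r. canonical (Node l r) \<Longrightarrow> X (Node l r) =
      (X l + Z l + a (card (leaves l))) + (X r + Z r + a (card (leaves r)))"
    and F: "F = (F + M + Abs_fps (\<lambda>k. a k * fps_nth tree_egf k)) * tree_egf"
    and S: "finite S" "S \<noteq> {}"
  shows "(\<Sum>t\<in>trees S. X t) = fact (card S) * fps_nth F (card S)"
proof -
  define G where "G = F + M + Abs_fps (\<lambda>k. a k * fps_nth tree_egf k)"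
  have F_G: "F = G * tree_egf" using F by (simp add: G_def)
  have "fps_nth F 0 = 0" by (subst F_G) (simp add: fps_mult_nth)
  then have "fps_nth G 0 = 0" by (simp add: G_def M_0)
  then have F_1: "fact 1 * fps_nth F 1 = 0" by (simp add: F_G fps_mult_nth)
  have F_rec: "fact n * fps_nth F n = 1 * (\<Sum>k=1..n-1. real (n - 1 choose (k - 1)) *
      ((fact k * fps_nth F k + fact k * fps_nth M k + a k * (fact k * fps_nth tree_egf k))
        * (fact (n - k) * fps_nth tree_egf (n - k))
      + fact k * fps_nth tree_egf k * (fact (n - k) * fps_nth F (n - k)
        + fact (n - k) * fps_nth M (n - k) + a (n - k) * (fact (n - k) * fps_nth tree_egf (n - k)))))"
    if "n \<ge> 2" for n
  proof -
    have G_nth: "fps_nth G k = fps_nth F k + fps_nth M k + a k * fps_nth tree_egf k" for k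
      by (simp add: G_def)
    show ?thesis
      using egf_convolution[OF that \<open>fps_nth G 0 = 0\<close> tree_egf_nth_0]
      by (simp add: F_G[symmetric] G_nth algebra_simps)
  qed
  have Z': "(\<Sum>t\<in>trees A. 1 * Z t) = fact (card A) * fps_nth M (card A)"
    if "finite A" "A \<noteq> {}" for A
    using Z[OF that] by simp
  have "(\<Sum>t\<in>trees S. 1 * X t) = fact (card S) * fps_nth F (card S)"
    by (rule uniform.sum_weight_additive_trees[where f = "\<lambda>n. fact n * fps_nth F n"
          and h = "\<lambda>n. fact n * fps_nth M n", OF sum_trees_one Z' X_Leaf X_Node F_1 F_rec S])
  then show ?thesis by simp
qed

lemma sum_lca_moment1:
  assumes "finite S" "S \<noteq> {}"
  shows "(\<Sum>t\<in>trees S. lca_moment 1 t) = fact (card S) * fps_nth moment1_egf (card S)"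
proof (rule sum_uniform_additive_trees[where Z = "\<lambda>_. 0" and M = 0 and a = triangular,
      OF _ _ _ _ _ assms])
  show "lca_moment 1 (Node l r) = (lca_moment 1 l + 0 + triangular (card (leaves l)))
      + (lca_moment 1 r + 0 + triangular (card (leaves r)))" if "canonical (Node l r)" for l r
    using lca_moment1_Node[OF that] by simp
  show "moment1_egf = (moment1_egf + 0 + Abs_fps (\<lambda>k. triangular k * fps_nth tree_egf k)) * tree_egf"
    using moment1_egf_rec by (simp add: pairs_egf_def)
qed (simp_all add: lca_moment_Leaf)

lemma sum_lca_moment2:
  assumes "finite S" "S \<noteq> {}"
  shows "(\<Sum>t\<in>trees S. lca_moment 2 t) = fact (card S) * fps_nth moment2_egf (card S)"
proof (rule sum_uniform_additive_trees[where Z = "\<lambda>t. 2 * lca_moment 1 t" and M = "2 * moment1_egf"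
      and a = triangular, OF _ _ _ _ _ assms])
  show "(\<Sum>t\<in>trees A. 2 * lca_moment 1 t) = fact (card A) * fps_nth (2 * moment1_egf) (card A)"
    if "finite A" "A \<noteq> {}" for A
    using sum_lca_moment1[OF that] by (simp add: sum_distrib_left[symmetric] numeral_fps_const)
  show "fps_nth (2 * moment1_egf) 0 = 0"
    by (simp add: moment1_egf_def numeral_fps_const fps_mult_nth)
  show "lca_moment 2 (Node l r) = (lca_moment 2 l + 2 * lca_moment 1 l + triangular (card (leaves l)))
      + (lca_moment 2 r + 2 * lca_moment 1 r + triangular (card (leaves r)))"
    if "canonical (Node l r)" for l r
    using lca_moment2_Node[OF that] by simp
  show "moment2_egf = (moment2_egf + 2 * moment1_egf
      + Abs_fps (\<lambda>k. triangular k * fps_nth tree_egf k)) * tree_egf"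
    using moment2_egf_rec by (simp add: pairs_egf_def)
qed (simp add: lca_moment_Leaf)

lemma pairs_egf_eq:
  "8 * pairs_egf = one_minus_2X_pow (- (3/2)) + 2 * one_minus_2X_pow (- (1/2)) - 3 * one_minus_2X_pow (1/2)"
proof (rule fps_ext)
  fix n
  define b where "b = fps_nth (one_minus_2X_pow (1/2)) n"
  have "fps_nth pairs_egf n = - triangular n * b"
    by (cases "n = 0") (simp_all add: pairs_egf_def tree_egf_nth triangular_def b_def)
  then have "fps_nth (8 * pairs_egf) n = - 4 * (real n * (real n + 1)) * b"
    by (simp add: numeral_fps_const triangular_def)
  also have "\<dots> = (1 + 2 * real n) * (1 - 2 * real n) * b + 2 * ((1 - 2 * real n) * b) - 3 * b"
    by (simp add: algebra_simps)
  also have "\<dots> = fps_nth (one_minus_2X_pow (- (3/2)) + 2 * one_minus_2X_pow (- (1/2))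
      - 3 * one_minus_2X_pow (1/2)) n"
    unfolding fps_sub_nth fps_add_nth numeral_fps_const fps_mult_left_const_nth
      one_minus_2X_pow_half_nth b_def by simp
  finally show "fps_nth (8 * pairs_egf) n = fps_nth (one_minus_2X_pow (- (3/2))
      + 2 * one_minus_2X_pow (- (1/2)) - 3 * one_minus_2X_pow (1/2)) n" .
qed

lemma moment2_egf_eq:
  "8 * moment2_egf = 2 * one_minus_2X_pow (- (5/2)) - 3 * one_minus_2X_pow (-2)
    + 5 * one_minus_2X_pow (- (3/2)) - 6 * one_minus_2X_pow (-1) - 4 * one_minus_2X_pow (- (1/2))
    + 9 - 3 * one_minus_2X_pow (1/2)"
proof -
  define s where "s = one_minus_2X_pow (1/2)"
  define i where "i = one_minus_2X_pow (- (1/2))"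
  have inv: "s * i = 1" by (simp add: s_def i_def flip: one_minus_2X_pow_add)
  have powers: "one_minus_2X_pow (-1) = i ^ 2" "one_minus_2X_pow (- (3/2)) = i ^ 3"
      "one_minus_2X_pow (-2) = i ^ 4" "one_minus_2X_pow (- (5/2)) = i ^ 5"
    by (simp_all add: i_def one_minus_2X_pow_power)
  show ?thesis
    using inv pairs_egf_eq
    unfolding moment2_egf_def moment1_egf_def tree_egf_def powers s_def[symmetric] i_def[symmetric]
    by algebra
qed

lemma dfact_even: "dfact (2 * m) = 2 ^ m * fact m"
  by (induction m) (auto simp: algebra_simps)

lemma dfact_pos: "dfact m > 0"
  by (induction m rule: dfact.induct) auto

lemma dfact_odd: "k \<ge> 1 \<Longrightarrow> dfact (2 * k - 1) = (2 * k - 1) * dfact (2 * k - 3)"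
proof (cases "k = 1")
  case False
  assume "k \<ge> 1"
  with False have "2 * k - 1 = Suc (Suc (2 * k - 3))" by simp
  then show ?thesis by (metis dfact.simps(3))
qed simp

text \<open>Equivalently \<open>n! [x^n] tree_egf = (2n - 3)!!\<close>, the number of trees on \<open>n\<close> labels.\<close>
lemma fact_mult_one_minus_2X_pow_half_nth:
  "n \<ge> 1 \<Longrightarrow> fact n * fps_nth (one_minus_2X_pow (1/2)) n = - real (dfact (2 * n - 3))"
proof (induction n rule: nat_induct_at_least)
  case base
  then show ?case by (simp add: one_minus_2X_pow_nth)
next
  case (Suc n)
  have "fact (Suc n) * fps_nth (one_minus_2X_pow (1/2)) (Suc n)
      = fact n * (real (Suc n) * fps_nth (one_minus_2X_pow (1/2)) (Suc n))"
    by (simp add: algebra_simps)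
  also have "\<dots> = (2 * real n - 1) * (fact n * fps_nth (one_minus_2X_pow (1/2)) n)"
    by (subst one_minus_2X_pow_nth_Suc) (simp add: algebra_simps)
  also have "\<dots> = - real (dfact (2 * Suc n - 3))"
    using Suc dfact_odd[OF Suc.hyps] by (simp add: of_nat_diff)
  finally show ?case .
qed

lemma fact_mult_moment2_egf_nth:
  assumes n: "n \<ge> 1"
  shows "fact n * fps_nth moment2_egf n
    = real (dfact (2 * n - 3)) * (real n * (4 * real n ^ 2 + 21 * real n - 7) / 6)
      - 3 / 8 * (real n + 3) * 2 ^ n * fact n"
proof -
  define b where "b = fps_nth (one_minus_2X_pow (1/2)) n"
  have "8 * fps_nth moment2_egf n = 2 * fps_nth (one_minus_2X_pow (- (5/2))) n - 3 * fps_nth (one_minus_2X_pow (-2)) n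
      + 5 * fps_nth (one_minus_2X_pow (- (3/2))) n - 6 * fps_nth (one_minus_2X_pow (-1)) n
      - 4 * fps_nth (one_minus_2X_pow (- (1/2))) n - 3 * b"
    using arg_cong[OF moment2_egf_eq, of "\<lambda>F. fps_nth F n"] n
    by (simp add: numeral_fps_const b_def)
  also have "\<dots> = (2 * ((3 + 2 * real n) * (1 + 2 * real n) * (1 - 2 * real n) / 3)
      + 5 * ((1 + 2 * real n) * (1 - 2 * real n)) - 4 * (1 - 2 * real n) - 3) * b
      - 3 * (real n + 3) * 2 ^ n"
    using one_minus_2X_pow_nth_neg_nat[of 1 n] one_minus_2X_pow_nth_neg_nat[of 2 n]
    unfolding one_minus_2X_pow_half_nth b_def by (simp add: algebra_simps)
  also have "2 * ((3 + 2 * real n) * (1 + 2 * real n) * (1 - 2 * real n) / 3)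
      + 5 * ((1 + 2 * real n) * (1 - 2 * real n)) - 4 * (1 - 2 * real n) - 3
      = - 4 / 3 * real n * (4 * real n ^ 2 + 21 * real n - 7)"
    by (simp add: field_simps power2_eq_square)
  finally have M: "8 * fps_nth moment2_egf n
      = - 4 / 3 * real n * (4 * real n ^ 2 + 21 * real n - 7) * b - 3 * (real n + 3) * 2 ^ n" .
  have "8 * (fact n * fps_nth moment2_egf n)
      = - 4 / 3 * real n * (4 * real n ^ 2 + 21 * real n - 7) * (fact n * b)
        - 3 * (real n + 3) * 2 ^ n * fact n"
    using arg_cong[OF M, of "\<lambda>x. fact n * x"] by (simp add: algebra_simps)
  then show ?thesis
    using fact_mult_one_minus_2X_pow_half_nth[OF n] unfolding b_def by (simp add: field_simps)
qed

lemma E_U_Phi2_eq: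
  assumes n: "n \<ge> 1"
  shows "E_U_Phi2 n = real n * (4 * real n ^ 2 + 21 * real n - 7) / 6
    - 3 / 4 * real n * (real n + 3) * real (dfact (2 * n - 2)) / real (dfact (2 * n - 3))"
proof -
  define D where "D = real (dfact (2 * n - 3))"
  have D: "D > 0" unfolding D_def using dfact_pos by simp
  have "E_U_Phi2 n = 1 / D * (\<Sum>t\<in>trees {1..n}. lca_moment 2 t)"
    unfolding E_U_Phi2_def P_U_def D_def sum_distrib_left
    by (intro sum.cong) (simp_all add: phylo_trees_eq_trees Phi2_eq_lca_moment)
  also have "\<dots> = 1 / D * (D * (real n * (4 * real n ^ 2 + 21 * real n - 7) / 6)
      - 3 / 8 * (real n + 3) * 2 ^ n * fact n)"
    using sum_lca_moment2[of "{1..n}"] fact_mult_moment2_egf_nth[OF n] n by (simp add: D_def)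
  also have "3 / 8 * (real n + 3) * 2 ^ n * fact n = 3 / 4 * real n * (real n + 3) * real (dfact (2 * n - 2))"
  proof -
    obtain m where m: "n = Suc m" using n by (cases n) auto
    have "2 * n - 2 = 2 * m" by (simp add: m)
    then have "real (dfact (2 * n - 2)) = 2 ^ m * fact m" by (simp add: dfact_even)
    then show ?thesis by (simp add: m algebra_simps)
  qed
  finally show ?thesis using D by (simp add: D_def field_simps)
qed

theorem proposition5:
  fixes n :: nat
  assumes "n \<ge> 2"
  shows "E_Y_Phi2 n = 5 * real n * (real n - 1) - 8 * real n * (harm n - 1) \<and>
         E_U_Phi2 n = real n * (4 * real n ^ 2 + 21 * real n - 7) / 6
           - 3 / 4 * real n * (real n + 3) * real (dfact (2*n-2)) / real (dfact (2*n-3))"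
proof
  show "E_Y_Phi2 n = 5 * real n * (real n - 1) - 8 * real n * (harm n - 1)"
    using E_Y_Phi2_eq[of n] assms by (simp add: yule_mean2_def algebra_simps)
  show "E_U_Phi2 n = real n * (4 * real n ^ 2 + 21 * real n - 7) / 6
      - 3 / 4 * real n * (real n + 3) * real (dfact (2*n-2)) / real (dfact (2*n-3))"
    using E_U_Phi2_eq[of n] assms by simp
qed

end
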